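(* There are absolute constants $c,C>0$ such that the following holds. Let $\beta^*\in\mathbb R^d$ have at most $k$ nonzero entries, $\mathbf X\in\mathbb R^{n\times d}$ have i.i.d. $N(0,1)$ entries, and $\eta\in\mathbb R^n$ be deterministic with $|\{i:|\eta_i|\le1\}|\ge\alpha n$ for some $\alpha\in(0,1]$; let $\mathbf y=\mathbf X\beta^*+\eta$. Let $\hat\beta$ be obtained by running the Coordinate-wise Median Algorithm on $(\mathbf y,\mathbf X)$ to get $\beta'$, and then keeping the $k$ entries of $\beta'$ of largest absolute value and setting all other entries to $0$. Then for any $0<\tau\le\alpha^2n$, \[\|\beta^*-\hat\beta\|^2\le C\cdot\frac{k\,\tau}{\alpha^2n}\big(1+\|\beta^*\|^2\big)\] with probability at least $1-2\exp(\ln d-c\tau)$.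
   Context: Coordinate-wise Median Algorithm on input $(y,X)\in\mathbb R^n\times\mathbb R^{n\times d}$: sample independent $w_i\sim N(0,1)$ and Rademacher signs $\sigma_i$, independent of everything else, and set $y'_i=\sigma_iy_i+w_i$, $X'_{i,\cdot}=\sigma_iX_{i,\cdot}$. For each $j\in[d]$ let $M_j=\{i:|X'_{ij}|\ge1/2\}$ and let $\beta'_j$ be the median of $\{y'_i/X'_{ij}:i\in M_j\}$. Output $\beta'=(\beta'_1,\dots,\beta'_d)$. *)

theory Defs
  imports "HOL-Probability.Probability"
begin

definition std_gauss :: "real measure" where
  "std_gauss = density lborel std_normal_density"

definition rademacher :: "real measure" where
  "rademacher = measure_pmf (pmf_of_set {-1, 1})"

text \<open>Joint sample space: the design matrix X (entries indexed by (i,j), i<n, j<d, iid N(0,1)),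
  the noise w (w_i iid N(0,1)) and the signs sigma (iid Rademacher), all independent.\<close>
definition sample_space :: "nat \<Rightarrow> nat \<Rightarrow>
    (((nat \<times> nat \<Rightarrow> real) \<times> (nat \<Rightarrow> real)) \<times> (nat \<Rightarrow> real)) measure" where
  "sample_space n d =
     (PiM ({..<n} \<times> {..<d}) (\<lambda>_. std_gauss) \<Otimes>\<^sub>M PiM {..<n} (\<lambda>_. std_gauss))
       \<Otimes>\<^sub>M PiM {..<n} (\<lambda>_. rademacher)"

text \<open>Median of a finite list of reals: middle element for odd length, average of the two middle
  elements for even length; 0 for the empty list (convention).\<close>
definition median_list :: "real list \<Rightarrow> real" where
  "median_list xs = (let s = sort xs; m = length xs in
     if m = 0 then 0 else (s ! ((m - 1) div 2) + s ! (m div 2)) / 2)"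

text \<open>Coordinate-wise Median Algorithm, with the internal randomness w, sigma given explicitly.\<close>
definition cwm :: "nat \<Rightarrow> (nat \<Rightarrow> real) \<Rightarrow> (nat \<times> nat \<Rightarrow> real) \<Rightarrow> (nat \<Rightarrow> real)
    \<Rightarrow> (nat \<Rightarrow> real) \<Rightarrow> nat \<Rightarrow> real" where
  "cwm n y X w \<sigma> j =
     (let y' = (\<lambda>i. \<sigma> i * y i + w i);
          X' = (\<lambda>i. \<sigma> i * X (i, j));
          M = {i. i < n \<and> \<bar>X' i\<bar> \<ge> 1/2}
      in median_list (map (\<lambda>i. y' i / X' i) (sorted_list_of_set M)))"

text \<open>Admissible supports for keeping the k largest-in-absolute-value entries (any tie-breaking).\<close>
definition top_k_sets :: "nat \<Rightarrow> nat \<Rightarrow> (nat \<Rightarrow> real) \<Rightarrow> nat set set" where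
  "top_k_sets d k b = {S. S \<subseteq> {..<d} \<and> card S = min k d \<and>
      (\<forall>i\<in>S. \<forall>j\<in>{..<d} - S. \<bar>b j\<bar> \<le> \<bar>b i\<bar>)}"

definition restrict_to :: "nat set \<Rightarrow> (nat \<Rightarrow> real) \<Rightarrow> nat \<Rightarrow> real" where
  "restrict_to S b = (\<lambda>j. if j \<in> S then b j else 0)"

end

theory Submission
  imports Defs
begin

text \<open>
  Fix a coordinate \<open>j\<close>. Negating the \<open>j\<close>-th column of \<open>X\<close> preserves the law of the sample,
  keeps the set of selected rows and turns the deviation \<open>y'\<^sub>i / X'\<^sub>i\<^sub>j - \<beta>\<^sub>j\<close> of every row
  into its negative. Hence the vote \<open>[dev > t] - [dev \<le> t]\<close> of a selected row has mean
  \<open>-P(selected, |dev| \<le> t)\<close>, and for each of the at least \<open>\<alpha> n\<close> rows with \<open>|\<eta>\<^sub>i| \<le> 1\<close> this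
  probability is of order \<open>t / sqrt (1 + |\<beta>|\<^sup>2)\<close>: with constant probability \<open>\<sigma>\<^sub>i = 1\<close> and
  \<open>|X\<^sub>i\<^sub>j| \<ge> 1/2\<close>, and independently the Gaussian remainder \<open>\<Sum>\<^sub>l \<beta>\<^sub>l X\<^sub>i\<^sub>l + w\<^sub>i\<close> (over \<open>l \<noteq> j\<close>) falls
  within \<open>t/2\<close> of \<open>-\<eta>\<^sub>i\<close>. A median above \<open>\<beta>\<^sub>j + t\<close> forces a nonnegative vote total, which
  Hoeffding's inequality for the independent rows makes exponentially unlikely; symmetrically
  below \<open>\<beta>\<^sub>j - t\<close>. A union bound over these \<open>2 d\<close> events makes every entry of \<open>\<beta>'\<close> accurate
  to within \<open>t\<close>, and keeping the \<open>k\<close> largest entries of such an estimate of a \<open>k\<close>-sparse vector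
  costs at most \<open>5 k t\<^sup>2\<close>.
\<close>

section \<open>Medians\<close>

lemma median_list_uminus: "median_list (map uminus xs) = - median_list xs"
proof -
  define s where "s = sort xs"
  define m where "m = length xs"
  have sorted_rev: "sort (map uminus xs) = rev (map uminus s)"
  proof (rule properties_for_sort)
    show "mset (rev (map uminus s)) = mset (map uminus xs)" by (simp add: s_def)
    show "sorted (rev (map uminus s))"
      unfolding s_def by (simp add: sorted_wrt_rev sorted_wrt_map)
  qed
  show ?thesis
  proof (cases "m = 0")
    case True then show ?thesis by (simp add: median_list_def m_def)
  next
    case False
    have ls: "length s = m" by (simp add: s_def m_def)
    have i1: "m - Suc ((m - Suc 0) div 2) = m div 2" and i2: "m - Suc (m div 2) = (m - Suc 0) div 2"
      using False by linarith+
    have "rev (map uminus s) ! ((m - 1) div 2) = - s ! (m div 2)"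
      using False ls by (simp add: rev_nth i1)
    moreover have "rev (map uminus s) ! (m div 2) = - s ! ((m - 1) div 2)"
      using False ls by (simp add: rev_nth i2)
    ultimately show ?thesis
      using False unfolding median_list_def Let_def sorted_rev by (simp add: s_def m_def field_simps)
  qed
qed

lemma sorted_length_filter_le_less_nth:
  fixes s :: "'a :: linorder list"
  assumes "sorted s" "k < length s" "a < s ! k"
  shows "length (filter (\<lambda>x. x \<le> a) s) \<le> k"
proof -
  have "\<forall>x \<in> set (drop k s). a < x"
  proof
    fix x assume "x \<in> set (drop k s)"
    then obtain i where "i < length s - k" "x = s ! (k + i)" by (auto simp: in_set_conv_nth)
    then show "a < x" using assms sorted_nth_mono[of s k "k + i"] by (simp add: less_diff_conv add.commute)
  qed
  then have "filter (\<lambda>x. x \<le> a) (drop k s) = []" by (auto simp: filter_empty_conv)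
  then have "length (filter (\<lambda>x. x \<le> a) s) = length (filter (\<lambda>x. x \<le> a) (take k s))"
    by (metis append_take_drop_id filter_append append_Nil2)
  also have "\<dots> \<le> k" using length_filter_le[of _ "take k s"] by simp
  finally show ?thesis .
qed

lemma median_list_less_imp_length_filter_le:
  fixes xs :: "real list"
  assumes a: "a < median_list xs"
  shows "length (filter (\<lambda>x. x \<le> a) xs) \<le> length (filter (\<lambda>x. a < x) xs)"
proof (cases "xs = []")
  case False
  define s where "s = sort xs"
  define m where "m = length xs"
  have s: "sorted s" "length s = m" "m \<noteq> 0" using False by (simp_all add: s_def m_def)
  have "s ! ((m - 1) div 2) \<le> s ! (m div 2)"
    using s by (intro sorted_nth_mono) (auto simp: div_le_mono)
  then have "a < s ! (m div 2)"
    using a s unfolding median_list_def Let_def by (simp add: s_def m_def)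
  then have "length (filter (\<lambda>x. x \<le> a) s) \<le> m div 2"
    using s by (intro sorted_length_filter_le_less_nth) auto
  moreover have "length (filter (\<lambda>x. x \<le> a) s) + length (filter (\<lambda>x. a < x) s) = m"
    using sum_length_filter_compl[of "\<lambda>x. x \<le> a" s] s by (simp add: not_le)
  moreover have count: "length (filter P s) = length (filter P xs)" for P
    by (metis s_def mset_filter mset_sort size_mset)
  ultimately show ?thesis using count[of "\<lambda>x. x \<le> a"] count[of "\<lambda>x. a < x"] by linarith
qed simp

lemma sum_votes_nonneg_if_median_far:
  fixes f :: "nat \<Rightarrow> real"
  assumes M: "M \<subseteq> {..<n}" and s: "s \<in> {-1, 1}"
    and far: "t < s * (median_list (map f (sorted_list_of_set M)) - b)"
  shows "0 \<le> (\<Sum>i<n. of_bool (i \<in> M \<and> t < s * (f i - b)) - of_bool (i \<in> M \<and> s * (f i - b) \<le> t) :: real)"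
proof -
  have fin: "finite M" using M finite_subset by blast
  obtain h c where h: "\<And>i. t < s * (f i - b) \<longleftrightarrow> c < h i" "\<And>i. s * (f i - b) \<le> t \<longleftrightarrow> h i \<le> c"
    and c: "c < median_list (map h (sorted_list_of_set M))"
  proof (cases "s = 1")
    case True
    show ?thesis by (rule that[of "b + t" f]) (use True far in auto)
  next
    case False
    then have "s = -1" using s by simp
    show ?thesis
      by (rule that[of "t - b" "\<lambda>i. - f i"])
        (use \<open>s = -1\<close> far median_list_uminus[of "map f _"] in \<open>auto simp: comp_def\<close>)
  qed
  have count: "length (filter P (map h (sorted_list_of_set M))) = card {i\<in>M. P (h i)}" for P
    using fin by (simp add: filter_map distinct_length_filter Int_def conj_commute)
  have "card {i\<in>M. h i \<le> c} \<le> card {i\<in>M. c < h i}"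
    using median_list_less_imp_length_filter_le[OF c] unfolding count .
  moreover have "(\<Sum>i<n. of_bool (i \<in> M \<and> P i) :: real) = card {i\<in>M. P i}" for P
    using M by (subst sum_of_bool_eq) (auto intro!: arg_cong[where f=card])
  ultimately show ?thesis by (simp add: sum_subtractf h)
qed

section \<open>Hard thresholding\<close>

lemma top_k_sets_missed_le:
  fixes b b' :: "nat \<Rightarrow> real"
  assumes err: "\<And>j. j < d \<Longrightarrow> \<bar>b' j - b j\<bar> \<le> t"
    and sparse: "card {j. j < d \<and> b j \<noteq> 0} \<le> k"
    and S: "S \<in> top_k_sets d k b'" and j: "j < d" "j \<notin> S"
  shows "\<bar>b j\<bar> \<le> 2 * t"
proof (cases "b j = 0")
  case True
  then show ?thesis using err[OF j(1)] by simp
next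
  case False
  define T where "T = {j. j < d \<and> b j \<noteq> 0}"
  have S_sub: "S \<subseteq> {..<d}" and card_S: "card S = min k d"
    and top: "\<And>i. i \<in> S \<Longrightarrow> \<bar>b' j\<bar> \<le> \<bar>b' i\<bar>"
    using S j unfolding top_k_sets_def by auto
  have "card T \<le> card S"
    using sparse card_mono[of "{..<d}" T] card_S by (auto simp: T_def)
  moreover have "j \<in> T - S" using False j by (simp add: T_def)
  ultimately have "\<not> S \<subseteq> T"
    by (metis DiffD1 DiffD2 T_def card_seteq finite_Collect_conjI finite_Collect_less_nat)
  then obtain i where i: "i \<in> S" "b i = 0" using S_sub by (auto simp: T_def)
  have "\<bar>b' j\<bar> \<le> t" using top[OF i(1)] err[of i] i S_sub by fastforce
  then show ?thesis using err[OF j(1)] by linarith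
qed

lemma top_k_restrict_sq_error_le:
  fixes b b' :: "nat \<Rightarrow> real"
  assumes err: "\<And>j. j < d \<Longrightarrow> \<bar>b' j - b j\<bar> \<le> t"
    and sparse: "card {j. j < d \<and> b j \<noteq> 0} \<le> k"
    and S: "S \<in> top_k_sets d k b'"
  shows "(\<Sum>j<d. (b j - restrict_to S b' j)\<^sup>2) \<le> 5 * real k * t\<^sup>2"
proof -
  define T where "T = {j. j < d \<and> b j \<noteq> 0}"
  have S_sub: "S \<subseteq> {..<d}" and card_S: "card S = min k d"
    using S unfolding top_k_sets_def by auto
  have sq_le: "x\<^sup>2 \<le> u\<^sup>2" if "\<bar>x\<bar> \<le> u" for x u :: real
    using that by (metis abs_ge_zero abs_le_square_iff abs_of_nonneg order.trans)
  have "(\<Sum>j<d. (b j - restrict_to S b' j)\<^sup>2)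
      = (\<Sum>j\<in>S. (b j - restrict_to S b' j)\<^sup>2) + (\<Sum>j\<in>{..<d} - S. (b j - restrict_to S b' j)\<^sup>2)"
    using sum.subset_diff[OF S_sub] by (simp add: add.commute)
  also have "\<dots> = (\<Sum>j\<in>S. (b j - b' j)\<^sup>2) + (\<Sum>j\<in>{..<d} - S. (b j)\<^sup>2)"
    by (simp add: restrict_to_def)
  also have "(\<Sum>j\<in>S. (b j - b' j)\<^sup>2) \<le> (\<Sum>j\<in>S. t\<^sup>2)"
    using err S_sub by (intro sum_mono sq_le) (auto simp: abs_minus_commute)
  also have "(\<Sum>j\<in>{..<d} - S. (b j)\<^sup>2) = (\<Sum>j\<in>T - S. (b j)\<^sup>2)"
    by (rule sum.mono_neutral_cong_right) (auto simp: T_def)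
  also have "\<dots> \<le> (\<Sum>j\<in>T - S. (2 * t)\<^sup>2)"
    using top_k_sets_missed_le[OF err sparse S]
    by (intro sum_mono sq_le) (auto simp: T_def)
  also have "(\<Sum>j\<in>S. t\<^sup>2) + (\<Sum>j\<in>T - S. (2 * t)\<^sup>2) = card S * t\<^sup>2 + 4 * card (T - S) * t\<^sup>2"
    by (simp add: power_mult_distrib)
  also have "\<dots> \<le> k * t\<^sup>2 + 4 * k * t\<^sup>2"
  proof -
    have "card (T - S) \<le> k" using sparse card_mono[of T "T - S"] by (auto simp: T_def)
    then show ?thesis using card_S by (intro add_mono mult_right_mono) auto
  qed
  finally show ?thesis by simp
qed

section \<open>Gaussian and Rademacher variables\<close>

lemma prob_space_std_gauss [simp]: "prob_space std_gauss"
  unfolding std_gauss_def by (rule prob_space_normal_density) simp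

lemma space_std_gauss [simp]: "space std_gauss = UNIV"
  unfolding std_gauss_def by simp

lemma sets_std_gauss [simp, measurable_cong]: "sets std_gauss = sets borel"
  unfolding std_gauss_def by simp

lemma prob_space_rademacher [simp]: "prob_space rademacher"
  unfolding rademacher_def by (rule prob_space_measure_pmf)

lemma space_rademacher [simp]: "space rademacher = UNIV"
  unfolding rademacher_def by simp

lemma sets_rademacher [simp]: "sets rademacher = UNIV"
  unfolding rademacher_def by simp

lemma measure_rademacher_1: "measure rademacher {1} = 1/2"
  unfolding rademacher_def by (subst measure_pmf_of_set) auto

lemma emeasure_std_gauss_vimage_uminus:
  assumes A: "A \<in> sets borel"
  shows "emeasure std_gauss (uminus -` A) = emeasure std_gauss A"
proof -
  have "uminus -` A \<in> sets (borel :: real measure)"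
    using measurable_sets[of "uminus :: real \<Rightarrow> real" borel borel A] A by simp
  have "emeasure std_gauss (uminus -` A) = (\<integral>\<^sup>+x. ennreal (std_normal_density (- x)) * indicator A (- x) \<partial>lborel)"
    using A \<open>uminus -` A \<in> sets borel\<close> unfolding std_gauss_def
    by (subst emeasure_density) (auto simp: normal_density_def indicator_def)
  also have "\<dots> = (\<integral>\<^sup>+x. ennreal (std_normal_density x) * indicator A x \<partial>lborel)"
    using A by (subst lborel_distr_uminus[symmetric], subst nn_integral_distr) auto
  also have "\<dots> = emeasure std_gauss A"
    using A unfolding std_gauss_def by (simp add: emeasure_density)
  finally show ?thesis .
qed

lemma normal_density_ge:
  assumes s: "1 \<le> s" and v: "\<bar>v\<bar> \<le> 2 * s"
  shows "1 / (27 * s) \<le> normal_density 0 s v"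
proof -
  have "exp (2::real) \<le> 3 * 3"
    using exp_le by (subst exp_add[of 1 1, simplified]) (intro mult_mono, auto)
  then have exp_ge: "1/9 \<le> exp (-2::real)" by (simp add: exp_minus field_simps)
  have "v\<^sup>2 \<le> (2 * s)\<^sup>2" using v s by (metis abs_le_square_iff abs_of_nonneg order.trans abs_ge_zero)
  then have "v\<^sup>2 / (2 * s\<^sup>2) \<le> 2" using s by (simp add: field_simps power2_eq_square)
  then have exp_v: "1/9 \<le> exp (- v\<^sup>2 / (2 * s\<^sup>2))" using exp_ge by (smt (verit) exp_le_cancel_iff minus_divide_left)
  have "sqrt (2 * pi) \<le> 3" using pi_less_4 by (simp add: real_sqrt_le_iff[of _ 9, simplified])
  then have "1 / (3 * s) \<le> 1 / sqrt (2 * pi * s\<^sup>2)"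
    using s by (simp add: real_sqrt_mult frac_le mult_right_mono)
  then have "1 / (3 * s) * (1/9) \<le> 1 / sqrt (2 * pi * s\<^sup>2) * exp (- v\<^sup>2 / (2 * s\<^sup>2))"
    using exp_v s by (intro mult_mono) auto
  then show ?thesis unfolding normal_density_def by simp
qed

lemma nn_integral_ge_interval:
  fixes f :: "real \<Rightarrow> real"
  assumes "a \<le> b" "0 \<le> c" "\<And>v. a \<le> v \<Longrightarrow> v \<le> b \<Longrightarrow> c \<le> f v" "{a..b} \<subseteq> S"
  shows "ennreal (c * (b - a)) \<le> (\<integral>\<^sup>+v. ennreal (f v) * indicator S v \<partial>lborel)"
proof -
  have "ennreal (c * (b - a)) = (\<integral>\<^sup>+v. ennreal c * indicator {a..b} v \<partial>lborel)"
    using assms(1,2) by (simp add: nn_integral_cmult_indicator ennreal_mult)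
  also have "\<dots> \<le> (\<integral>\<^sup>+v. ennreal (f v) * indicator S v \<partial>lborel)"
    using assms(3,4) by (intro nn_integral_mono) (auto simp: indicator_def intro: ennreal_leI)
  finally show ?thesis .
qed

lemma measure_ge_of_emeasure_ge:
  assumes "finite_measure M" "ennreal c \<le> emeasure M A"
  shows "c \<le> measure M A"
  using assms by (cases "c \<le> 0")
    (auto simp: finite_measure.emeasure_eq_measure intro: order.trans[OF _ measure_nonneg])

lemma measure_std_gauss_abs_ge_half: "1/54 \<le> measure std_gauss {v. 1/2 \<le> \<bar>v\<bar>}"
proof -
  have "ennreal (1/27 * (1 - 1/2)) \<le> (\<integral>\<^sup>+v. ennreal (normal_density 0 1 v) * indicator {v. 1/2 \<le> \<bar>v\<bar>} v \<partial>lborel)"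
    using normal_density_ge[of 1] by (intro nn_integral_ge_interval) auto
  also have "\<dots> = emeasure std_gauss {v. 1/2 \<le> \<bar>v\<bar>}"
    unfolding std_gauss_def by (simp add: emeasure_density)
  finally show ?thesis
    by (intro measure_ge_of_emeasure_ge) (auto intro: prob_space.finite_measure)
qed

lemma (in prob_space) prob_normal_shifted_abs_le:
  assumes Z: "distributed M lborel Z (\<lambda>v. ennreal (normal_density 0 s v))"
    and s: "1 \<le> s" and e: "\<bar>e\<bar> \<le> 1" and u: "0 \<le> u" "u \<le> 1"
  shows "2 * u / 27 \<le> prob {x\<in>space M. \<bar>Z x + e\<bar> \<le> u * s}"
proof -
  have "u * s \<le> s" using u s by (simp add: mult_left_le_one_le)
  then have dens: "1 / (27 * s) \<le> normal_density 0 s v" if "- e - u * s \<le> v" "v \<le> - e + u * s" for v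
    using that e s by (intro normal_density_ge[OF s]) linarith
  have "ennreal (1 / (27 * s) * ((- e + u * s) - (- e - u * s))) \<le>
      (\<integral>\<^sup>+v. ennreal (normal_density 0 s v) * indicator {v. \<bar>v + e\<bar> \<le> u * s} v \<partial>lborel)"
    using s u dens by (intro nn_integral_ge_interval) auto
  also have "\<dots> = emeasure M (Z -` {v. \<bar>v + e\<bar> \<le> u * s} \<inter> space M)"
    by (rule distributed_emeasure[OF Z, symmetric]) measurable
  finally have "1 / (27 * s) * ((- e + u * s) - (- e - u * s)) \<le> prob (Z -` {v. \<bar>v + e\<bar> \<le> u * s} \<inter> space M)"
    by (intro measure_ge_of_emeasure_ge) (auto intro: finite_measure)
  then show ?thesis using s by (simp add: field_simps Int_def conj_commute)
qed

lemma (in prob_space) expectation_vote: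
  fixes D :: "'a \<Rightarrow> real"
  assumes P: "Measurable.pred M P" and D: "D \<in> borel_measurable M" and t: "0 \<le> t"
    and sym: "prob {x\<in>space M. P x \<and> t < D x} = prob {x\<in>space M. P x \<and> D x < - t}"
  shows "expectation (\<lambda>x. of_bool (P x \<and> t < D x) - of_bool (P x \<and> D x \<le> t))
       = - prob {x\<in>space M. P x \<and> \<bar>D x\<bar> \<le> t}"
proof -
  have ind: "expectation (\<lambda>x. of_bool (Q x)) = prob {x\<in>space M. Q x}" if "Measurable.pred M Q" for Q
  proof -
    have "expectation (\<lambda>x. of_bool (Q x)) = expectation (indicator {x\<in>space M. Q x})"
      by (intro Bochner_Integration.integral_cong) (auto simp: indicator_def)
    also have "\<dots> = prob {x\<in>space M. Q x}" using that by simp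
    finally show ?thesis .
  qed
  have split: "{x\<in>space M. P x \<and> D x \<le> t} = {x\<in>space M. P x \<and> \<bar>D x\<bar> \<le> t} \<union> {x\<in>space M. P x \<and> D x < - t}"
    using t by (auto simp: abs_le_iff)
  have "{x\<in>space M. P x \<and> \<bar>D x\<bar> \<le> t} \<in> events" "{x\<in>space M. P x \<and> D x < - t} \<in> events"
    using P D by measurable
  then have "prob {x\<in>space M. P x \<and> D x \<le> t} = prob {x\<in>space M. P x \<and> \<bar>D x\<bar> \<le> t} + prob {x\<in>space M. P x \<and> D x < - t}"
    unfolding split using t by (intro finite_measure_Union) auto
  moreover have "expectation (\<lambda>x. of_bool (P x \<and> t < D x) - of_bool (P x \<and> D x \<le> t))
      = prob {x\<in>space M. P x \<and> t < D x} - prob {x\<in>space M. P x \<and> D x \<le> t}"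
    using P D by (subst Bochner_Integration.integral_diff) (auto simp: ind intro!: integrable_const_bound[where B=1])
  ultimately show ?thesis using sym by simp
qed

lemma (in prob_space) prob_sum_nonneg_le_exp:
  fixes X :: "'i \<Rightarrow> 'a \<Rightarrow> real"
  assumes I: "finite I" "I \<noteq> {}" and indep: "indep_vars (\<lambda>_. borel) X I"
    and bounded: "\<And>i x. i \<in> I \<Longrightarrow> x \<in> space M \<Longrightarrow> X i x \<in> {-1..1}"
    and mean: "(\<Sum>i\<in>I. expectation (X i)) \<le> - \<epsilon>" and \<epsilon>: "0 \<le> \<epsilon>"
  shows "prob {x\<in>space M. 0 \<le> (\<Sum>i\<in>I. X i x)} \<le> exp (- \<epsilon>\<^sup>2 / (2 * card I))"
proof -
  interpret Hoeffding_ineq M I X "\<lambda>_. -1" "\<lambda>_. 1" "\<Sum>i\<in>I. expectation (X i)"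
    by unfold_locales (use I indep bounded in \<open>auto intro!: AE_I2\<close>)
  have "(\<lambda>x. \<Sum>i\<in>I. X i x) \<in> borel_measurable M"
    using random_variable by (intro borel_measurable_sum) auto
  then have "prob {x\<in>space M. 0 \<le> (\<Sum>i\<in>I. X i x)}
      \<le> prob {x\<in>space M. (\<Sum>i\<in>I. X i x) \<ge> (\<Sum>i\<in>I. expectation (X i)) + \<epsilon>}"
    using mean by (intro finite_measure_mono) auto
  also have "\<dots> \<le> exp (-2 * \<epsilon>\<^sup>2 / (\<Sum>i\<in>I. (1 - (-1::real))\<^sup>2))"
    using \<epsilon> I by (intro Hoeffding_ineq_ge) (auto simp: card_gt_0_iff)
  finally show ?thesis by (simp add: field_simps)
qed

section \<open>The sample as a family of independent coordinates\<close>

text \<open>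
  A sample \<open>((X, w), \<sigma>)\<close> is flattened into one family indexed by \<open>coord\<close>, so that the
  independence of all its entries becomes the independence of the coordinates of a single
  product measure.
\<close>

type_synonym coord = "(nat \<times> nat) + (nat + nat)"

abbreviation X_at :: "nat \<Rightarrow> nat \<Rightarrow> coord" where "X_at i l \<equiv> Inl (i, l)"
abbreviation w_at :: "nat \<Rightarrow> coord" where "w_at i \<equiv> Inr (Inl i)"
abbreviation \<sigma>_at :: "nat \<Rightarrow> coord" where "\<sigma>_at i \<equiv> Inr (Inr i)"

definition coords :: "nat \<Rightarrow> nat \<Rightarrow> coord set" where
  "coords n d = Inl ` ({..<n} \<times> {..<d}) \<union> Inr ` (Inl ` {..<n} \<union> Inr ` {..<n})"

definition coord_distr :: "coord \<Rightarrow> real measure" where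
  "coord_distr k = (case k of Inr (Inr _) \<Rightarrow> rademacher | _ \<Rightarrow> std_gauss)"

definition coord_space :: "nat \<Rightarrow> nat \<Rightarrow> (coord \<Rightarrow> real) measure" where
  "coord_space n d = PiM (coords n d) coord_distr"

definition sample_coord :: "coord \<Rightarrow> ((nat \<times> nat \<Rightarrow> real) \<times> (nat \<Rightarrow> real)) \<times> (nat \<Rightarrow> real) \<Rightarrow> real" where
  "sample_coord k \<omega> = (case k of Inl p \<Rightarrow> fst (fst \<omega>) p | Inr (Inl i) \<Rightarrow> snd (fst \<omega>) i | Inr (Inr i) \<Rightarrow> snd \<omega> i)"

definition to_coords :: "nat \<Rightarrow> nat \<Rightarrow> ((nat \<times> nat \<Rightarrow> real) \<times> (nat \<Rightarrow> real)) \<times> (nat \<Rightarrow> real) \<Rightarrow> coord \<Rightarrow> real" where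
  "to_coords n d \<omega> = (\<lambda>k\<in>coords n d. sample_coord k \<omega>)"

lemma finite_coords [simp]: "finite (coords n d)"
  unfolding coords_def by auto

lemma coord_distr_simps [simp]:
  "coord_distr (Inl p) = std_gauss" "coord_distr (w_at i) = std_gauss" "coord_distr (\<sigma>_at i) = rademacher"
  by (simp_all add: coord_distr_def)

lemma prob_space_coord_distr [simp]: "prob_space (coord_distr k)"
  unfolding coord_distr_def by (auto split: sum.split)

lemma space_coord_distr [simp]: "space (coord_distr k) = UNIV"
  unfolding coord_distr_def by (auto split: sum.split)

lemma product_sigma_finite_coord_distr: "product_sigma_finite coord_distr"
  unfolding product_sigma_finite_def by (simp add: prob_space_imp_sigma_finite)

lemma prob_space_coord_space [simp]: "prob_space (coord_space n d)"
  unfolding coord_space_def by (rule prob_space_PiM) simp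

lemma space_sample_space: "space (sample_space n d) =
    (PiE ({..<n} \<times> {..<d}) (\<lambda>_. UNIV) \<times> PiE {..<n} (\<lambda>_. UNIV)) \<times> PiE {..<n} (\<lambda>_. UNIV)"
  unfolding sample_space_def by (simp add: space_pair_measure space_PiM)

lemma ball_coords: "(\<forall>k\<in>coords n d. P k) \<longleftrightarrow>
    (\<forall>p\<in>{..<n} \<times> {..<d}. P (Inl p)) \<and> (\<forall>i<n. P (w_at i)) \<and> (\<forall>i<n. P (\<sigma>_at i))"
  unfolding coords_def by blast

lemma prod_coords:
  fixes f :: "coord \<Rightarrow> 'a :: comm_monoid_mult"
  shows "(\<Prod>k\<in>coords n d. f k) =
    (\<Prod>p\<in>{..<n} \<times> {..<d}. f (Inl p)) * (\<Prod>i<n. f (w_at i)) * (\<Prod>i<n. f (\<sigma>_at i))"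
  unfolding coords_def
  by (subst prod.union_disjoint prod.reindex, auto simp: inj_on_def)+ (simp add: mult.assoc)

lemma measurable_to_coords [measurable]: "to_coords n d \<in> sample_space n d \<rightarrow>\<^sub>M coord_space n d"
  unfolding to_coords_def coord_space_def
proof (rule measurable_restrict)
  fix k assume "k \<in> coords n d"
  then consider p where "p \<in> {..<n} \<times> {..<d}" "k = Inl p" | i where "i < n" "k = w_at i"
    | i where "i < n" "k = \<sigma>_at i"
    unfolding coords_def by auto
  then show "sample_coord k \<in> sample_space n d \<rightarrow>\<^sub>M coord_distr k"
    by cases (simp add: sample_coord_def[abs_def] sample_space_def, measurable)+
qed

lemma emeasure_PiM_const:
  assumes "prob_space M" "finite I" "\<And>i. i \<in> I \<Longrightarrow> A i \<in> sets M"
  shows "emeasure (PiM I (\<lambda>_. M)) (PiE I A) = (\<Prod>i\<in>I. emeasure M (A i))"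
proof -
  have "product_sigma_finite (\<lambda>_::'i. M)"
    using assms(1) unfolding product_sigma_finite_def by (simp add: prob_space_imp_sigma_finite)
  then show ?thesis using assms(2,3) by (rule product_sigma_finite.emeasure_PiM)
qed

lemma vimage_to_coords_PiE:
  "to_coords n d -` PiE (coords n d) A \<inter> space (sample_space n d) =
    (PiE ({..<n} \<times> {..<d}) (\<lambda>p. A (Inl p)) \<times> PiE {..<n} (\<lambda>i. A (w_at i))) \<times> PiE {..<n} (\<lambda>i. A (\<sigma>_at i))"
proof (intro set_eqI)
  fix \<omega> :: "((nat \<times> nat \<Rightarrow> real) \<times> (nat \<Rightarrow> real)) \<times> (nat \<Rightarrow> real)"
  obtain X w \<sigma> where \<omega>: "\<omega> = ((X, w), \<sigma>)" by (metis prod.collapse)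
  have "to_coords n d \<omega> \<in> PiE (coords n d) A \<longleftrightarrow> (\<forall>k\<in>coords n d. sample_coord k \<omega> \<in> A k)"
    unfolding to_coords_def by (auto simp: PiE_iff)
  then show "\<omega> \<in> to_coords n d -` PiE (coords n d) A \<inter> space (sample_space n d) \<longleftrightarrow>
      \<omega> \<in> (PiE ({..<n} \<times> {..<d}) (\<lambda>p. A (Inl p)) \<times> PiE {..<n} (\<lambda>i. A (w_at i))) \<times> PiE {..<n} (\<lambda>i. A (\<sigma>_at i))"
    unfolding ball_coords space_sample_space \<omega> by (auto simp: PiE_iff sample_coord_def)
qed

lemma emeasure_sample_space_PiE:
  assumes "\<And>p. p \<in> {..<n} \<times> {..<d} \<Longrightarrow> A1 p \<in> sets borel" "\<And>i. i < n \<Longrightarrow> A2 i \<in> sets borel"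
  shows "emeasure (sample_space n d) ((PiE ({..<n} \<times> {..<d}) A1 \<times> PiE {..<n} A2) \<times> PiE {..<n} A3) =
    (\<Prod>p\<in>{..<n} \<times> {..<d}. emeasure std_gauss (A1 p)) * (\<Prod>i<n. emeasure std_gauss (A2 i))
      * (\<Prod>i<n. emeasure rademacher (A3 i))"
proof -
  interpret G1: prob_space "PiM ({..<n} \<times> {..<d}) (\<lambda>_. std_gauss)" by (rule prob_space_PiM) simp
  interpret G2: prob_space "PiM {..<n} (\<lambda>_. std_gauss)" by (rule prob_space_PiM) simp
  interpret G3: prob_space "PiM {..<n} (\<lambda>_. rademacher)" by (rule prob_space_PiM) simp
  interpret G12: pair_prob_space "PiM ({..<n} \<times> {..<d}) (\<lambda>_. std_gauss)" "PiM {..<n} (\<lambda>_. std_gauss)" ..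
  interpret G123: pair_prob_space "PiM ({..<n} \<times> {..<d}) (\<lambda>_. std_gauss) \<Otimes>\<^sub>M PiM {..<n} (\<lambda>_. std_gauss)"
    "PiM {..<n} (\<lambda>_. rademacher)" ..
  have "PiE ({..<n} \<times> {..<d}) A1 \<in> sets (PiM ({..<n} \<times> {..<d}) (\<lambda>_. std_gauss))"
    "PiE {..<n} A2 \<in> sets (PiM {..<n} (\<lambda>_. std_gauss))" "PiE {..<n} A3 \<in> sets (PiM {..<n} (\<lambda>_. rademacher))"
    using assms by (auto intro!: sets_PiM_I_finite)
  moreover have "emeasure (PiM {..<n} (\<lambda>_. std_gauss)) (PiE {..<n} A2) = (\<Prod>i<n. emeasure std_gauss (A2 i))"
    using assms(2) by (intro emeasure_PiM_const) auto
  ultimately show ?thesis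
    unfolding sample_space_def using assms(1)
    by (simp add: G3.emeasure_pair_measure_Times G2.emeasure_pair_measure_Times emeasure_PiM_const)
qed

lemma distr_to_coords: "distr (sample_space n d) (coord_space n d) (to_coords n d) = coord_space n d"
  unfolding coord_space_def
proof (rule product_sigma_finite.PiM_eqI[OF product_sigma_finite_coord_distr])
  fix A assume A: "\<And>k. k \<in> coords n d \<Longrightarrow> A k \<in> sets (coord_distr k)"
  have A_X: "A (Inl p) \<in> sets borel" if "p \<in> {..<n} \<times> {..<d}" for p
    using that A[of "Inl p"] by (auto simp: coords_def)
  have A_w: "A (w_at i) \<in> sets borel" if "i < n" for i
    using that A[of "w_at i"] by (auto simp: coords_def)
  have "emeasure (distr (sample_space n d) (PiM (coords n d) coord_distr) (to_coords n d)) (PiE (coords n d) A)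
      = emeasure (sample_space n d) (to_coords n d -` PiE (coords n d) A \<inter> space (sample_space n d))"
    using A measurable_to_coords[of n d] unfolding coord_space_def
    by (intro emeasure_distr) (auto intro: sets_PiM_I_finite)
  also have "\<dots> = (\<Prod>p\<in>{..<n} \<times> {..<d}. emeasure std_gauss (A (Inl p))) * (\<Prod>i<n. emeasure std_gauss (A (w_at i)))
      * (\<Prod>i<n. emeasure rademacher (A (\<sigma>_at i)))"
    unfolding vimage_to_coords_PiE
    using A_X A_w by (simp add: emeasure_sample_space_PiE)
  also have "\<dots> = (\<Prod>k\<in>coords n d. emeasure (coord_distr k) (A k))"
    unfolding prod_coords by simp
  finally show "emeasure (distr (sample_space n d) (PiM (coords n d) coord_distr) (to_coords n d)) (PiE (coords n d) A)
      = (\<Prod>k\<in>coords n d. emeasure (coord_distr k) (A k))" .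
qed simp_all

lemma measure_to_coords_vimage:
  assumes "B \<in> sets (coord_space n d)"
  shows "measure (sample_space n d) (to_coords n d -` B \<inter> space (sample_space n d)) = measure (coord_space n d) B"
  using assms by (subst distr_to_coords[symmetric, of n d], subst measure_distr) auto

lemma to_coords_apply:
  assumes "i < n"
  shows "l < d \<Longrightarrow> to_coords n d ((X, w), \<sigma>) (X_at i l) = X (i, l)"
    and "to_coords n d ((X, w), \<sigma>) (w_at i) = w i"
    and "to_coords n d ((X, w), \<sigma>) (\<sigma>_at i) = \<sigma> i"
  using assms by (auto simp: to_coords_def sample_coord_def coords_def)

lemma borel_measurable_coord_distr: "f \<in> borel_measurable borel \<Longrightarrow> f \<in> borel_measurable (coord_distr k)"
  unfolding coord_distr_def
  by (auto split: sum.split simp: measurable_def measurable_cong_sets[OF sets_std_gauss refl])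

lemma borel_measurable_coord:
  assumes "k \<in> K"
  shows "(\<lambda>x. x k) \<in> borel_measurable (PiM K coord_distr)"
  using measurable_comp[OF measurable_component_singleton[OF assms] borel_measurable_coord_distr[of "\<lambda>v. v"]]
  by (simp add: o_def)

lemma indep_coords:
  assumes "n > 0"
  shows "prob_space.indep_vars (coord_space n d) coord_distr (\<lambda>k x. x k) (coords n d)"
proof -
  interpret prob_space "coord_space n d" by simp
  have "w_at 0 \<in> coords n d" using assms by (simp add: coords_def)
  moreover have "random_variable (coord_distr k) (\<lambda>x. x k)" if "k \<in> coords n d" for k
    unfolding coord_space_def using that by (rule measurable_component_singleton)
  moreover have "distr (coord_space n d) (\<Pi>\<^sub>M k\<in>coords n d. coord_distr k) (\<lambda>x. \<lambda>k\<in>coords n d. x k)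
      = (\<Pi>\<^sub>M k\<in>coords n d. distr (coord_space n d) (coord_distr k) (\<lambda>x. x k))"
  proof -
    have "distr (coord_space n d) (\<Pi>\<^sub>M k\<in>coords n d. coord_distr k) (\<lambda>x. \<lambda>k\<in>coords n d. x k)
        = distr (coord_space n d) (coord_space n d) (\<lambda>x. x)"
      by (rule distr_cong) (auto simp: coord_space_def space_PiM PiE_def extensional_def fun_eq_iff)
    also have "\<dots> = (\<Pi>\<^sub>M k\<in>coords n d. distr (coord_space n d) (coord_distr k) (\<lambda>x. x k))"
      unfolding coord_space_def by (auto intro!: PiM_cong distr_PiM_component[symmetric])
    finally show ?thesis .
  qed
  ultimately show ?thesis by (subst indep_vars_iff_distr_eq_PiM') auto
qed

definition row :: "nat \<Rightarrow> nat \<Rightarrow> coord set" where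
  "row d i = Inl ` ({i} \<times> {..<d}) \<union> {w_at i, \<sigma>_at i}"

lemma indep_vars_row_functions:
  assumes n: "n > 0"
    and meas: "\<And>i. i < n \<Longrightarrow> f i \<in> borel_measurable (PiM (row d i) coord_distr)"
    and local: "\<And>i x. i < n \<Longrightarrow> f i (restrict x (row d i)) = f i x"
  shows "prob_space.indep_vars (coord_space n d) (\<lambda>_. borel) f {..<n}"
proof -
  interpret prob_space "coord_space n d" by simp
  have "indep_vars (\<lambda>i. PiM (row d i) coord_distr) (\<lambda>i x. restrict (\<lambda>k. x k) (row d i)) {..<n}"
    by (rule indep_vars_restrict[OF indep_coords[OF n]])
      (auto simp: row_def coords_def disjoint_family_on_def)
  then have "indep_vars (\<lambda>_. borel) (\<lambda>i x. f i (restrict x (row d i))) {..<n}"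
    by (rule indep_vars_compose2) (use meas in auto)
  then show ?thesis by (rule indep_vars_cong[THEN iffD1, rotated 3]) (auto simp: local fun_eq_iff)
qed

lemma prob_coord_in:
  assumes k: "k \<in> coords n d" and S: "S \<in> sets (coord_distr k)"
  shows "measure (coord_space n d) {x\<in>space (coord_space n d). x k \<in> S} = measure (coord_distr k) S"
proof -
  have "measure (coord_distr k) S = measure (distr (coord_space n d) (coord_distr k) (\<lambda>x. x k)) S"
    unfolding coord_space_def using k by (subst distr_PiM_component) auto
  also have "\<dots> = measure (coord_space n d) ((\<lambda>x. x k) -` S \<inter> space (coord_space n d))"
    using k S unfolding coord_space_def by (intro measure_distr measurable_component_singleton)
  finally show ?thesis by (simp add: Int_def conj_commute)
qed

lemma distributed_coord_std_gauss:
  assumes k: "k \<in> coords n d" and g: "coord_distr k = std_gauss"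
  shows "distributed (coord_space n d) lborel (\<lambda>x. x k) (\<lambda>v. ennreal (std_normal_density v))"
proof -
  have meas: "(\<lambda>x. x k) \<in> coord_space n d \<rightarrow>\<^sub>M coord_distr k"
    unfolding coord_space_def using k by (rule measurable_component_singleton)
  have "distr (coord_space n d) lborel (\<lambda>x. x k) = distr (coord_space n d) (coord_distr k) (\<lambda>x. x k)"
    using g by (intro distr_cong) simp_all
  also have "\<dots> = std_gauss"
    unfolding coord_space_def using k g by (subst distr_PiM_component) auto
  finally show ?thesis
    using meas g unfolding distributed_def std_gauss_def
    by (simp add: measurable_cong_sets[OF refl sets_std_gauss[unfolded std_gauss_def]])
qed

lemma distributed_row_gauss_sum:
  fixes b :: "nat \<Rightarrow> real"
  assumes i: "i < n" and L: "L \<subseteq> {..<d}" and b: "\<And>l. l \<in> L \<Longrightarrow> b l \<noteq> 0"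
  shows "distributed (coord_space n d) lborel (\<lambda>x. (\<Sum>l\<in>L. b l * x (X_at i l)) + x (w_at i))
           (\<lambda>v. ennreal (normal_density 0 (sqrt (1 + (\<Sum>l\<in>L. (b l)\<^sup>2))) v))"
proof -
  interpret prob_space "coord_space n d" by simp
  define J where "J = insert (w_at i) ((\<lambda>l. X_at i l) ` L)"
  define c where "c k = (case k of Inl p \<Rightarrow> b (snd p) | Inr _ \<Rightarrow> 1)" for k :: coord
  have fin: "finite L" using L finite_subset by blast
  have J: "J \<subseteq> coords n d" "\<And>k. k \<in> J \<Longrightarrow> coord_distr k = std_gauss" "\<And>k. k \<in> J \<Longrightarrow> c k \<noteq> 0"
    using i L b by (auto simp: J_def coords_def c_def)
  have "indep_vars coord_distr (\<lambda>k x. x k) J"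
    using indep_vars_subset[OF indep_coords J(1)] i by simp
  then have "indep_vars (\<lambda>_. borel) (\<lambda>k x. (\<lambda>v. c k * v) (x k)) J"
    by (rule indep_vars_compose2) (simp add: borel_measurable_coord_distr)
  moreover have "distributed (coord_space n d) lborel (\<lambda>x. c k * x k) (\<lambda>v. ennreal (normal_density 0 \<bar>c k\<bar> v))"
    if "k \<in> J" for k
  proof -
    have "distributed (coord_space n d) lborel (\<lambda>x. 0 + c k * x k) (\<lambda>v. ennreal (normal_density (0 + c k * 0) (\<bar>c k\<bar> * 1) v))"
      using J that by (intro normal_density_affine distributed_coord_std_gauss) auto
    then show ?thesis by simp
  qed
  ultimately have "distributed (coord_space n d) lborel (\<lambda>x. \<Sum>k\<in>J. c k * x k)
      (\<lambda>v. ennreal (normal_density (\<Sum>k\<in>J. 0) (sqrt (\<Sum>k\<in>J. \<bar>c k\<bar>\<^sup>2)) v))"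
    using fin J(3) by (intro sum_indep_normal) (auto simp: J_def)
  moreover have "(\<Sum>k\<in>J. c k * x k) = (\<Sum>l\<in>L. b l * x (X_at i l)) + x (w_at i)" for x
    using fin by (subst J_def, subst sum.insert) (auto simp: sum.reindex inj_on_def c_def)
  moreover have "(\<Sum>k\<in>J. \<bar>c k\<bar>\<^sup>2) = 1 + (\<Sum>l\<in>L. (b l)\<^sup>2)"
    using fin by (subst J_def, subst sum.insert) (auto simp: sum.reindex inj_on_def c_def)
  ultimately show ?thesis by simp
qed

definition negate_on :: "coord set \<Rightarrow> (coord \<Rightarrow> real) \<Rightarrow> coord \<Rightarrow> real" where
  "negate_on C x = (\<lambda>k. if k \<in> C then - x k else x k)"

lemma measurable_negate_on:
  assumes C: "C \<subseteq> coords n d" "\<And>k. k \<in> C \<Longrightarrow> coord_distr k = std_gauss"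
  shows "negate_on C \<in> coord_space n d \<rightarrow>\<^sub>M coord_space n d"
  unfolding coord_space_def negate_on_def
proof (rule measurable_PiM_single')
  fix k assume k: "k \<in> coords n d"
  show "(\<lambda>x. if k \<in> C then - x k else x k) \<in> PiM (coords n d) coord_distr \<rightarrow>\<^sub>M coord_distr k"
  proof (cases "k \<in> C")
    case True
    have "(\<lambda>x. - x k) \<in> borel_measurable (PiM (coords n d) coord_distr)"
      using borel_measurable_coord[OF k] by measurable
    then show ?thesis using True C(2)[OF True] by (simp add: measurable_cong_sets[OF refl sets_std_gauss])
  qed (use measurable_component_singleton[OF k] in simp)
qed (use C(1) in \<open>auto simp: space_PiM PiE_def extensional_def\<close>)

lemma distr_negate_on:
  assumes C: "C \<subseteq> coords n d" "\<And>k. k \<in> C \<Longrightarrow> coord_distr k = std_gauss"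
  shows "distr (coord_space n d) (coord_space n d) (negate_on C) = coord_space n d"
  unfolding coord_space_def
proof (rule product_sigma_finite.PiM_eqI[OF product_sigma_finite_coord_distr])
  fix A assume A: "\<And>k. k \<in> coords n d \<Longrightarrow> A k \<in> sets (coord_distr k)"
  define A' where "A' k = (if k \<in> C then uminus -` A k else A k)" for k
  have A_borel: "A k \<in> sets borel" if "k \<in> C" for k
    using A[of k] C that by auto
  have A': "A' k \<in> sets (coord_distr k)" if "k \<in> coords n d" for k
    using A[OF that] A_borel C(2) measurable_sets[of "uminus :: real \<Rightarrow> real" borel borel]
    by (auto simp: A'_def)
  have "emeasure (distr (PiM (coords n d) coord_distr) (PiM (coords n d) coord_distr) (negate_on C)) (PiE (coords n d) A)
      = emeasure (PiM (coords n d) coord_distr) (negate_on C -` PiE (coords n d) A \<inter> space (PiM (coords n d) coord_distr))"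
    using measurable_negate_on[OF C] A unfolding coord_space_def
    by (intro emeasure_distr) (auto intro: sets_PiM_I_finite)
  also have "negate_on C -` PiE (coords n d) A \<inter> space (PiM (coords n d) coord_distr) = PiE (coords n d) A'"
    using C(1) by (auto simp: negate_on_def space_PiM PiE_def Pi_def extensional_def A'_def split: if_splits)
  also have "emeasure (PiM (coords n d) coord_distr) (PiE (coords n d) A') = (\<Prod>k\<in>coords n d. emeasure (coord_distr k) (A' k))"
    using A' by (intro product_sigma_finite.emeasure_PiM[OF product_sigma_finite_coord_distr]) auto
  also have "\<dots> = (\<Prod>k\<in>coords n d. emeasure (coord_distr k) (A k))"
    using C(2) A_borel by (intro prod.cong) (auto simp: A'_def emeasure_std_gauss_vimage_uminus)
  finally show "emeasure (distr (PiM (coords n d) coord_distr) (PiM (coords n d) coord_distr) (negate_on C)) (PiE (coords n d) A)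
      = (\<Prod>k\<in>coords n d. emeasure (coord_distr k) (A k))" .
qed simp_all

section \<open>Votes of the rows\<close>

definition cwm_response :: "nat \<Rightarrow> (nat \<Rightarrow> real) \<Rightarrow> (nat \<Rightarrow> real) \<Rightarrow> (coord \<Rightarrow> real) \<Rightarrow> nat \<Rightarrow> real" where
  "cwm_response d \<beta> \<eta> x i = (\<Sum>l<d. x (X_at i l) * \<beta> l) + \<eta> i"

definition cwm_ratio :: "nat \<Rightarrow> (nat \<Rightarrow> real) \<Rightarrow> (nat \<Rightarrow> real) \<Rightarrow> nat \<Rightarrow> (coord \<Rightarrow> real) \<Rightarrow> nat \<Rightarrow> real" where
  "cwm_ratio d \<beta> \<eta> j x i = (x (\<sigma>_at i) * cwm_response d \<beta> \<eta> x i + x (w_at i)) / (x (\<sigma>_at i) * x (X_at i j))"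

definition cwm_selected :: "nat \<Rightarrow> (coord \<Rightarrow> real) \<Rightarrow> nat \<Rightarrow> bool" where
  "cwm_selected j x i \<longleftrightarrow> 1/2 \<le> \<bar>x (\<sigma>_at i) * x (X_at i j)\<bar>"

text \<open>
  The sign \<open>s \<in> {-1, 1}\<close> selects the side of \<open>\<beta> j\<close> that is tested, so that both directions
  of failure are handled by one argument.
\<close>

definition cwm_vote :: "nat \<Rightarrow> (nat \<Rightarrow> real) \<Rightarrow> (nat \<Rightarrow> real) \<Rightarrow> nat \<Rightarrow> real \<Rightarrow> real \<Rightarrow> nat \<Rightarrow> (coord \<Rightarrow> real) \<Rightarrow> real" where
  "cwm_vote d \<beta> \<eta> j s t i x =
     of_bool (cwm_selected j x i \<and> t < s * (cwm_ratio d \<beta> \<eta> j x i - \<beta> j))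
     - of_bool (cwm_selected j x i \<and> s * (cwm_ratio d \<beta> \<eta> j x i - \<beta> j) \<le> t)"

lemma row_subset_coords: "i < n \<Longrightarrow> row d i \<subseteq> coords n d"
  unfolding row_def coords_def by auto

lemma
  assumes K: "row d i \<subseteq> K" and j: "j < d"
  shows borel_measurable_cwm_ratio: "(\<lambda>x. cwm_ratio d \<beta> \<eta> j x i) \<in> borel_measurable (PiM K coord_distr)"
    and measurable_cwm_selected: "Measurable.pred (PiM K coord_distr) (\<lambda>x. cwm_selected j x i)"
proof -
  have X: "(\<lambda>x. x (X_at i l)) \<in> borel_measurable (PiM K coord_distr)" if "l < d" for l
    using K that by (intro borel_measurable_coord) (auto simp: row_def)
  have w: "(\<lambda>x. x (w_at i)) \<in> borel_measurable (PiM K coord_distr)"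
    and \<sigma>: "(\<lambda>x. x (\<sigma>_at i)) \<in> borel_measurable (PiM K coord_distr)"
    using K by (auto intro!: borel_measurable_coord simp: row_def)
  have "(\<lambda>x. cwm_response d \<beta> \<eta> x i) \<in> borel_measurable (PiM K coord_distr)"
    unfolding cwm_response_def using X by measurable
  then show "(\<lambda>x. cwm_ratio d \<beta> \<eta> j x i) \<in> borel_measurable (PiM K coord_distr)"
    unfolding cwm_ratio_def using X[OF j] w \<sigma> by measurable
  show "Measurable.pred (PiM K coord_distr) (\<lambda>x. cwm_selected j x i)"
    unfolding cwm_selected_def using X[OF j] \<sigma> by measurable
qed

lemma cwm_vote_row_local:
  assumes "j < d" and "\<And>k. k \<in> row d i \<Longrightarrow> x' k = x k"
  shows "cwm_vote d \<beta> \<eta> j s t i x' = cwm_vote d \<beta> \<eta> j s t i x"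
proof -
  have "cwm_response d \<beta> \<eta> x' i = cwm_response d \<beta> \<eta> x i"
    unfolding cwm_response_def using assms(2) by (auto simp: row_def intro!: sum.cong)
  moreover have "x' (\<sigma>_at i) = x (\<sigma>_at i)" "x' (w_at i) = x (w_at i)" "x' (X_at i j) = x (X_at i j)"
    using assms by (auto simp: row_def)
  ultimately show ?thesis by (simp add: cwm_vote_def cwm_ratio_def cwm_selected_def)
qed

lemma indep_cwm_votes:
  assumes "n > 0" "j < d"
  shows "prob_space.indep_vars (coord_space n d) (\<lambda>_. borel) (\<lambda>i. cwm_vote d \<beta> \<eta> j s t i) {..<n}"
proof (rule indep_vars_row_functions[OF assms(1)])
  fix i
  note m = borel_measurable_cwm_ratio[OF subset_refl assms(2)] measurable_cwm_selected[OF subset_refl assms(2)]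
  show "cwm_vote d \<beta> \<eta> j s t i \<in> borel_measurable (PiM (row d i) coord_distr)"
    unfolding cwm_vote_def using m by measurable
  show "cwm_vote d \<beta> \<eta> j s t i (restrict x (row d i)) = cwm_vote d \<beta> \<eta> j s t i x" for x
    using assms(2) by (intro cwm_vote_row_local) auto
qed

lemma cwm_ratio_negate_column:
  assumes i: "i < n" and j: "j < d" and sel: "cwm_selected j x i"
  defines "C \<equiv> Inl ` ({..<n} \<times> {j})"
  shows "cwm_ratio d \<beta> \<eta> j (negate_on C x) i - \<beta> j = - (cwm_ratio d \<beta> \<eta> j x i - \<beta> j)"
proof -
  have nz: "x (\<sigma>_at i) * x (X_at i j) \<noteq> 0" using sel unfolding cwm_selected_def by auto
  have "(\<Sum>l<d. negate_on C x (X_at i l) * \<beta> l) = (\<Sum>l<d. x (X_at i l) * \<beta> l - (if l = j then 2 * x (X_at i j) * \<beta> j else 0))"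
    using i by (intro sum.cong) (auto simp: negate_on_def C_def)
  also have "\<dots> = (\<Sum>l<d. x (X_at i l) * \<beta> l) - 2 * x (X_at i j) * \<beta> j"
    using j by (simp add: sum_subtractf)
  finally have resp: "cwm_response d \<beta> \<eta> (negate_on C x) i = cwm_response d \<beta> \<eta> x i - 2 * x (X_at i j) * \<beta> j"
    unfolding cwm_response_def by simp
  have coord: "negate_on C x (\<sigma>_at i) = x (\<sigma>_at i)" "negate_on C x (w_at i) = x (w_at i)"
    "negate_on C x (X_at i j) = - x (X_at i j)"
    using i by (auto simp: negate_on_def C_def)
  show ?thesis using nz unfolding cwm_ratio_def resp coord by (simp add: field_simps)
qed

lemma prob_cwm_deviation_symmetric:
  assumes i: "i < n" and j: "j < d"
  shows "measure (coord_space n d) {x\<in>space (coord_space n d). cwm_selected j x i \<and> t < cwm_ratio d \<beta> \<eta> j x i - \<beta> j}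
       = measure (coord_space n d) {x\<in>space (coord_space n d). cwm_selected j x i \<and> cwm_ratio d \<beta> \<eta> j x i - \<beta> j < - t}"
    (is "measure _ ?G = measure _ ?L")
proof -
  define C :: "coord set" where "C = Inl ` ({..<n} \<times> {j})"
  have C: "C \<subseteq> coords n d" "\<And>k. k \<in> C \<Longrightarrow> coord_distr k = std_gauss"
    using j by (auto simp: C_def coords_def)
  note negate = measurable_negate_on[OF C]
  have "?G \<in> sets (coord_space n d)"
    using borel_measurable_cwm_ratio[OF row_subset_coords[OF i] j] measurable_cwm_selected[OF row_subset_coords[OF i] j]
    unfolding coord_space_def by measurable
  moreover have "negate_on C -` ?G \<inter> space (coord_space n d) = ?L"
  proof -
    have "cwm_selected j (negate_on C x) i \<longleftrightarrow> cwm_selected j x i" for x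
      by (auto simp: cwm_selected_def negate_on_def abs_mult)
    then show ?thesis
      using cwm_ratio_negate_column[OF i j] measurable_space[OF negate]
      by (auto simp: C_def)
  qed
  ultimately have "measure (distr (coord_space n d) (coord_space n d) (negate_on C)) ?G = measure (coord_space n d) ?L"
    using negate by (simp add: measure_distr)
  then show ?thesis by (simp add: distr_negate_on[OF C])
qed

lemma expectation_cwm_vote:
  assumes i: "i < n" and j: "j < d" and s: "s \<in> {-1, 1}" and t: "0 \<le> t"
  shows "prob_space.expectation (coord_space n d) (cwm_vote d \<beta> \<eta> j s t i)
       = - measure (coord_space n d) {x\<in>space (coord_space n d). cwm_selected j x i \<and> \<bar>cwm_ratio d \<beta> \<eta> j x i - \<beta> j\<bar> \<le> t}"
proof -
  interpret prob_space "coord_space n d" by simp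
  have m: "(\<lambda>x. cwm_ratio d \<beta> \<eta> j x i) \<in> borel_measurable (coord_space n d)"
    "Measurable.pred (coord_space n d) (\<lambda>x. cwm_selected j x i)"
    using borel_measurable_cwm_ratio[OF row_subset_coords[OF i] j] measurable_cwm_selected[OF row_subset_coords[OF i] j]
    by (simp_all add: coord_space_def)
  have sym: "prob {x\<in>space (coord_space n d). cwm_selected j x i \<and> t < s * (cwm_ratio d \<beta> \<eta> j x i - \<beta> j)}
      = prob {x\<in>space (coord_space n d). cwm_selected j x i \<and> s * (cwm_ratio d \<beta> \<eta> j x i - \<beta> j) < - t}"
  proof (cases "s = 1")
    case False
    then have "s = -1" using s by simp
    then show ?thesis using prob_cwm_deviation_symmetric[OF i j, of t \<beta> \<eta>]
      by (simp add: minus_less_iff less_minus_iff algebra_simps)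
  qed (use prob_cwm_deviation_symmetric[OF i j] in simp)
  have "expectation (cwm_vote d \<beta> \<eta> j s t i)
      = - prob {x\<in>space (coord_space n d). cwm_selected j x i \<and> \<bar>s * (cwm_ratio d \<beta> \<eta> j x i - \<beta> j)\<bar> \<le> t}"
    unfolding cwm_vote_def[abs_def] using m t sym by (intro expectation_vote) auto
  then show ?thesis using s by (auto simp: abs_mult)
qed

lemma indep_row_parts:
  fixes \<beta> :: "nat \<Rightarrow> real"
  assumes i: "i < n" and j: "j < d" and L: "L \<subseteq> {..<d} - {j}"
  defines "V \<equiv> \<lambda>m x. if m = 0 then x (\<sigma>_at i) else if m = 1 then x (X_at i j)
                     else (\<Sum>l\<in>L. \<beta> l * x (X_at i l)) + x (w_at i)"
  shows "prob_space.indep_vars (coord_space n d) (\<lambda>_. borel) V {0, 1, 2::nat}"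
proof -
  interpret prob_space "coord_space n d" by simp
  define K :: "nat \<Rightarrow> coord set" where
    "K m = (if m = 0 then {\<sigma>_at i} else if m = 1 then {X_at i j} else insert (w_at i) ((\<lambda>l. X_at i l) ` L))" for m
  have restr: "indep_vars (\<lambda>m. PiM (K m) coord_distr) (\<lambda>m x. restrict x (K m)) {0, 1, 2::nat}"
    using i j L
    by (intro indep_vars_restrict[OF indep_coords]) (auto simp: K_def coords_def disjoint_family_on_def)
  have meas: "V m \<in> borel_measurable (PiM (K m) coord_distr)" if "m \<in> {0, 1, 2}" for m
  proof -
    have c: "(\<lambda>x. x k) \<in> borel_measurable (PiM (K m) coord_distr)" if "k \<in> K m" for k
      using that by (rule borel_measurable_coord)
    from that consider "m = 0" | "m = 1" | "m = 2" by blast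
    then show ?thesis
    proof cases
      case 3
      then have "(\<lambda>x. (\<Sum>l\<in>L. \<beta> l * x (X_at i l)) + x (w_at i)) \<in> borel_measurable (PiM (K m) coord_distr)"
        using c[of "w_at i"] c[of "X_at i _"]
        by (intro borel_measurable_add borel_measurable_sum borel_measurable_times) (auto simp: K_def)
      then show ?thesis using 3 by (simp add: V_def)
    qed (use c in \<open>simp_all add: V_def K_def\<close>)
  qed
  have local: "V m (restrict x (K m)) = V m x" if "m \<in> {0, 1, 2}" for m x
    using that unfolding V_def K_def by (auto intro!: sum.cong)
  have "indep_vars (\<lambda>_. borel) (\<lambda>m x. V m (restrict x (K m))) {0, 1, 2::nat}"
    using restr meas by (rule indep_vars_compose2)
  then show ?thesis by (rule indep_vars_cong[THEN iffD1, rotated 3]) (auto simp: local fun_eq_iff)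
qed

lemma cwm_deviation_if_sign_one:
  fixes \<beta> :: "nat \<Rightarrow> real"
  assumes j: "j < d" and \<sigma>: "x (\<sigma>_at i) = 1" and X: "x (X_at i j) \<noteq> 0"
  defines "L \<equiv> {l. l < d \<and> l \<noteq> j \<and> \<beta> l \<noteq> 0}"
  shows "cwm_ratio d \<beta> \<eta> j x i - \<beta> j = ((\<Sum>l\<in>L. \<beta> l * x (X_at i l)) + x (w_at i) + \<eta> i) / x (X_at i j)"
proof -
  have "(\<Sum>l<d. x (X_at i l) * \<beta> l) = x (X_at i j) * \<beta> j + (\<Sum>l\<in>{..<d} - {j}. x (X_at i l) * \<beta> l)"
    using j by (subst sum.remove[of _ j]) auto
  also have "(\<Sum>l\<in>{..<d} - {j}. x (X_at i l) * \<beta> l) = (\<Sum>l\<in>L. \<beta> l * x (X_at i l))"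
    unfolding L_def by (rule sum.mono_neutral_cong_right) auto
  finally show ?thesis using X unfolding cwm_ratio_def cwm_response_def \<sigma> by (simp add: field_simps)
qed

lemma prob_good_row_ge:
  fixes \<beta> \<eta> :: "nat \<Rightarrow> real"
  assumes i: "i < n" and j: "j < d" and \<eta>: "\<bar>\<eta> i\<bar> \<le> 1" and u: "0 \<le> u" "u \<le> 1"
  defines "L \<equiv> {l. l < d \<and> l \<noteq> j \<and> \<beta> l \<noteq> 0}"
  defines "s \<equiv> sqrt (1 + (\<Sum>l\<in>L. (\<beta> l)\<^sup>2))"
  shows "u / 1458 \<le> measure (coord_space n d) {x\<in>space (coord_space n d). x (\<sigma>_at i) = 1 \<and>
    1/2 \<le> \<bar>x (X_at i j)\<bar> \<and> \<bar>(\<Sum>l\<in>L. \<beta> l * x (X_at i l)) + x (w_at i) + \<eta> i\<bar> \<le> u * s}"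
proof -
  interpret prob_space "coord_space n d" by simp
  define Z where "Z x = (\<Sum>l\<in>L. \<beta> l * x (X_at i l)) + x (w_at i)" for x
  define V :: "nat \<Rightarrow> (coord \<Rightarrow> real) \<Rightarrow> real" where
    "V m x = (if m = 0 then x (\<sigma>_at i) else if m = 1 then x (X_at i j) else Z x)" for m x
  define E :: "nat \<Rightarrow> real set" where
    "E m = (if m = 0 then {1} else if m = 1 then {v. 1/2 \<le> \<bar>v\<bar>} else {v. \<bar>v + \<eta> i\<bar> \<le> u * s})" for m
  let ?event = "\<lambda>m. V m -` E m \<inter> space (coord_space n d)"
  have indep: "prob (\<Inter>m\<in>{0, 1, 2}. ?event m) = (\<Prod>m\<in>{0, 1, 2}. prob (?event m))"
  proof (rule indep_varsD_finite)
    show "indep_vars (\<lambda>_. borel) V {0, 1, 2}"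
      using indep_row_parts[OF i j, of L \<beta>] unfolding V_def Z_def L_def by auto
  qed (simp_all add: E_def)
  have p0: "prob (?event 0) = 1/2"
    using prob_coord_in[of "\<sigma>_at i" n d "{1}"] i measure_rademacher_1
    by (simp add: V_def E_def coords_def vimage_def Int_def conj_commute)
  have p1: "1/54 \<le> prob (?event 1)"
    using prob_coord_in[of "X_at i j" n d "{v. 1/2 \<le> \<bar>v\<bar>}"] i j measure_std_gauss_abs_ge_half
    by (simp add: V_def E_def coords_def vimage_def Int_def conj_commute)
  have p2: "2 * u / 27 \<le> prob (?event 2)"
  proof -
    have "distributed (coord_space n d) lborel Z (\<lambda>v. ennreal (normal_density 0 s v))"
      unfolding Z_def s_def using i by (intro distributed_row_gauss_sum) (auto simp: L_def)
    from prob_normal_shifted_abs_le[OF this _ \<eta> u] show ?thesis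
      by (simp add: V_def E_def vimage_def Int_def conj_commute s_def sum_nonneg)
  qed
  have "1/2 * (1/54) * (2 * u / 27) \<le> prob (?event 0) * prob (?event 1) * prob (?event 2)"
    using p0 p1 p2 u by (intro mult_mono) auto
  also have "\<dots> = prob (\<Inter>m\<in>{0, 1, 2}. ?event m)" using indep by simp
  also have "(\<Inter>m\<in>{0, 1, 2}. ?event m) = {x\<in>space (coord_space n d). x (\<sigma>_at i) = 1 \<and>
      1/2 \<le> \<bar>x (X_at i j)\<bar> \<and> \<bar>(\<Sum>l\<in>L. \<beta> l * x (X_at i l)) + x (w_at i) + \<eta> i\<bar> \<le> u * s}"
    by (auto simp: V_def E_def Z_def)
  finally show ?thesis by simp
qed

lemma prob_cwm_selected_close_ge:
  fixes \<beta> \<eta> :: "nat \<Rightarrow> real"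
  assumes i: "i < n" and j: "j < d" and \<eta>: "\<bar>\<eta> i\<bar> \<le> 1" and u: "0 \<le> u" "u \<le> 1"
    and t: "2 * u * sqrt (1 + (\<Sum>l<d. (\<beta> l)\<^sup>2)) \<le> t"
  shows "u / 1458 \<le> measure (coord_space n d)
    {x\<in>space (coord_space n d). cwm_selected j x i \<and> \<bar>cwm_ratio d \<beta> \<eta> j x i - \<beta> j\<bar> \<le> t}"
proof -
  interpret prob_space "coord_space n d" by simp
  define L where "L = {l. l < d \<and> l \<noteq> j \<and> \<beta> l \<noteq> 0}"
  define s where "s = sqrt (1 + (\<Sum>l\<in>L. (\<beta> l)\<^sup>2))"
  have "(\<Sum>l\<in>L. (\<beta> l)\<^sup>2) \<le> (\<Sum>l<d. (\<beta> l)\<^sup>2)"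
    unfolding L_def by (intro sum_mono2) auto
  then have "u * s \<le> u * sqrt (1 + (\<Sum>l<d. (\<beta> l)\<^sup>2))"
    using u(1) unfolding s_def by (intro mult_left_mono) auto
  then have us: "u * s \<le> t / 2" using t by linarith
  have "{x\<in>space (coord_space n d). x (\<sigma>_at i) = 1 \<and> 1/2 \<le> \<bar>x (X_at i j)\<bar> \<and>
      \<bar>(\<Sum>l\<in>L. \<beta> l * x (X_at i l)) + x (w_at i) + \<eta> i\<bar> \<le> u * s} \<subseteq>
      {x\<in>space (coord_space n d). cwm_selected j x i \<and> \<bar>cwm_ratio d \<beta> \<eta> j x i - \<beta> j\<bar> \<le> t}"
  proof (safe)
    fix x assume \<sigma>: "x (\<sigma>_at i) = 1" and X: "1/2 \<le> \<bar>x (X_at i j)\<bar>"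
      and Z: "\<bar>(\<Sum>l\<in>L. \<beta> l * x (X_at i l)) + x (w_at i) + \<eta> i\<bar> \<le> u * s"
    show "cwm_selected j x i" using \<sigma> X by (simp add: cwm_selected_def)
    have X0: "x (X_at i j) \<noteq> 0" using X by auto
    have "\<bar>cwm_ratio d \<beta> \<eta> j x i - \<beta> j\<bar> \<le> (t / 2) / (1 / 2)"
      using X Z us unfolding cwm_deviation_if_sign_one[where x=x and i=i and \<beta>=\<beta> and \<eta>=\<eta>, OF j \<sigma> X0] L_def[symmetric] abs_divide
      by (intro frac_le) auto
    then show "\<bar>cwm_ratio d \<beta> \<eta> j x i - \<beta> j\<bar> \<le> t" by simp
  qed
  moreover have "{x\<in>space (coord_space n d). cwm_selected j x i \<and> \<bar>cwm_ratio d \<beta> \<eta> j x i - \<beta> j\<bar> \<le> t} \<in> events"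
    using borel_measurable_cwm_ratio[OF row_subset_coords[OF i] j, of \<beta> \<eta>]
      measurable_cwm_selected[OF row_subset_coords[OF i] j]
    unfolding coord_space_def by measurable
  ultimately show ?thesis
    using prob_good_row_ge[where \<beta>=\<beta> and \<eta>=\<eta>, OF i j \<eta> u] unfolding L_def s_def
    by (meson finite_measure_mono order.trans)
qed

section \<open>Failure events and the error bound\<close>

definition cwm_fail :: "nat \<Rightarrow> nat \<Rightarrow> (nat \<Rightarrow> real) \<Rightarrow> (nat \<Rightarrow> real) \<Rightarrow> nat \<Rightarrow> real \<Rightarrow> real \<Rightarrow> (coord \<Rightarrow> real) set" where
  "cwm_fail n d \<beta> \<eta> j s t = {x\<in>space (coord_space n d). 0 \<le> (\<Sum>i<n. cwm_vote d \<beta> \<eta> j s t i x)}"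

lemma sets_cwm_fail:
  assumes "j < d"
  shows "cwm_fail n d \<beta> \<eta> j s t \<in> sets (coord_space n d)"
proof -
  have "cwm_vote d \<beta> \<eta> j s t i \<in> borel_measurable (coord_space n d)" if "i < n" for i
    using borel_measurable_cwm_ratio[OF row_subset_coords[OF that] assms]
      measurable_cwm_selected[OF row_subset_coords[OF that] assms]
    unfolding cwm_vote_def[abs_def] coord_space_def by measurable
  then have "(\<lambda>x. \<Sum>i<n. cwm_vote d \<beta> \<eta> j s t i x) \<in> borel_measurable (coord_space n d)"
    by (intro borel_measurable_sum) auto
  then show ?thesis unfolding cwm_fail_def by measurable
qed

lemma prob_cwm_fail_le:
  fixes \<beta> \<eta> :: "nat \<Rightarrow> real" and \<alpha> :: real
  assumes n: "0 < n" and j: "j < d" and s: "s \<in> {-1, 1}"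
    and u: "0 \<le> u" "u \<le> 1" and t: "2 * u * sqrt (1 + (\<Sum>l<d. (\<beta> l)\<^sup>2)) \<le> t"
    and \<alpha>: "0 \<le> \<alpha>" and good: "\<alpha> * n \<le> card {i. i < n \<and> \<bar>\<eta> i\<bar> \<le> 1}"
  shows "measure (coord_space n d) (cwm_fail n d \<beta> \<eta> j s t) \<le> exp (- (u * \<alpha>)\<^sup>2 * n / (2 * 1458\<^sup>2))"
proof -
  interpret prob_space "coord_space n d" by simp
  let ?close = "\<lambda>i. prob {x\<in>space (coord_space n d). cwm_selected j x i \<and> \<bar>cwm_ratio d \<beta> \<eta> j x i - \<beta> j\<bar> \<le> t}"
  define G where "G = {i. i < n \<and> \<bar>\<eta> i\<bar> \<le> 1}"
  have t0: "0 \<le> t" using t u by (smt (verit) mult_nonneg_nonneg real_sqrt_ge_zero sum_nonneg zero_le_power2)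
  have "u * \<alpha> * n / 1458 \<le> card G * (u / 1458)"
    using mult_left_mono[OF good u(1)] by (simp add: G_def algebra_simps)
  also have "\<dots> = (\<Sum>i\<in>G. u / 1458)" by simp
  also have "\<dots> \<le> (\<Sum>i\<in>G. ?close i)"
    using prob_cwm_selected_close_ge[OF _ j _ u t] by (intro sum_mono) (auto simp: G_def)
  also have "\<dots> \<le> (\<Sum>i<n. ?close i)" by (rule sum_mono2) (auto simp: G_def)
  finally have "(\<Sum>i<n. expectation (cwm_vote d \<beta> \<eta> j s t i)) \<le> - (u * \<alpha> * n / 1458)"
    using expectation_cwm_vote[OF _ j s t0] by (simp add: sum_negf)
  moreover have "cwm_vote d \<beta> \<eta> j s t i x \<in> {-1..1}" for i x by (simp add: cwm_vote_def)
  ultimately have "prob (cwm_fail n d \<beta> \<eta> j s t) \<le> exp (- (u * \<alpha> * n / 1458)\<^sup>2 / (2 * card {..<n}))"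
    unfolding cwm_fail_def using n u \<alpha>
    by (intro prob_sum_nonneg_le_exp indep_cwm_votes j) auto
  also have "\<dots> = exp (- (u * \<alpha>)\<^sup>2 * n / (2 * 1458\<^sup>2))"
    using n by (simp add: power_mult_distrib power2_eq_square field_simps)
  finally show ?thesis .
qed

lemma prob_cwm_fail_union_le:
  fixes \<beta> \<eta> :: "nat \<Rightarrow> real" and \<alpha> :: real
  assumes n: "0 < n" and u: "0 \<le> u" "u \<le> 1" and t: "2 * u * sqrt (1 + (\<Sum>l<d. (\<beta> l)\<^sup>2)) \<le> t"
    and \<alpha>: "0 \<le> \<alpha>" and good: "\<alpha> * n \<le> card {i. i < n \<and> \<bar>\<eta> i\<bar> \<le> 1}"
  shows "measure (coord_space n d) (\<Union>j<d. \<Union>s\<in>{-1, 1}. cwm_fail n d \<beta> \<eta> j s t)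
    \<le> 2 * d * exp (- (u * \<alpha>)\<^sup>2 * n / (2 * 1458\<^sup>2))"
proof -
  interpret prob_space "coord_space n d" by simp
  have "prob (\<Union>j<d. \<Union>s\<in>{-1, 1}. cwm_fail n d \<beta> \<eta> j s t) \<le> (\<Sum>j<d. prob (\<Union>s\<in>{-1, 1}. cwm_fail n d \<beta> \<eta> j s t))"
    by (intro finite_measure_subadditive_finite) (auto simp: sets_cwm_fail)
  also have "\<dots> \<le> (\<Sum>j<d. \<Sum>s\<in>{-1, 1}. prob (cwm_fail n d \<beta> \<eta> j s t))"
    by (intro sum_mono finite_measure_subadditive_finite) (auto simp: sets_cwm_fail)
  also have "\<dots> \<le> (\<Sum>j<d. \<Sum>s\<in>{-1, 1::real}. exp (- (u * \<alpha>)\<^sup>2 * n / (2 * 1458\<^sup>2)))"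
    using n u t \<alpha> good by (intro sum_mono prob_cwm_fail_le) auto
  finally show ?thesis by simp
qed

lemma cwm_eq_median_cwm_ratio:
  fixes X :: "nat \<times> nat \<Rightarrow> real" and w \<sigma> :: "nat \<Rightarrow> real" and n :: nat
  assumes j: "j < d"
  defines "x \<equiv> to_coords n d ((X, w), \<sigma>)"
  shows "cwm n (\<lambda>i. (\<Sum>l<d. X (i, l) * \<beta> l) + \<eta> i) X w \<sigma> j =
    median_list (map (\<lambda>i. cwm_ratio d \<beta> \<eta> j x i) (sorted_list_of_set {i. i < n \<and> cwm_selected j x i}))"
proof -
  have response: "cwm_response d \<beta> \<eta> x i = (\<Sum>l<d. X (i, l) * \<beta> l) + \<eta> i" if "i < n" for i
    unfolding cwm_response_def x_def using that by (simp add: to_coords_apply)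
  have "{i. i < n \<and> 1/2 \<le> \<bar>\<sigma> i * X (i, j)\<bar>} = {i. i < n \<and> cwm_selected j x i}"
    using j by (auto simp: cwm_selected_def x_def to_coords_apply)
  moreover have "(\<sigma> i * ((\<Sum>l<d. X (i, l) * \<beta> l) + \<eta> i) + w i) / (\<sigma> i * X (i, j)) = cwm_ratio d \<beta> \<eta> j x i"
    if "i < n" for i
    using that j unfolding cwm_ratio_def response[OF that] by (simp add: x_def to_coords_apply)
  ultimately show ?thesis
    unfolding cwm_def Let_def by (auto intro!: arg_cong[where f=median_list] map_cong)
qed

lemma cwm_far_imp_fail:
  assumes j: "j < d" and s: "s \<in> {-1, 1}"
    and far: "t < s * (cwm n (\<lambda>i. (\<Sum>l<d. X (i, l) * \<beta> l) + \<eta> i) X w \<sigma> j - \<beta> j)"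
    and space: "to_coords n d ((X, w), \<sigma>) \<in> space (coord_space n d)"
  shows "to_coords n d ((X, w), \<sigma>) \<in> cwm_fail n d \<beta> \<eta> j s t"
proof -
  define x where "x = to_coords n d ((X, w), \<sigma>)"
  define M where "M = {i. i < n \<and> cwm_selected j x i}"
  have "0 \<le> (\<Sum>i<n. of_bool (i \<in> M \<and> t < s * (cwm_ratio d \<beta> \<eta> j x i - \<beta> j))
      - of_bool (i \<in> M \<and> s * (cwm_ratio d \<beta> \<eta> j x i - \<beta> j) \<le> t) :: real)"
    using far unfolding cwm_eq_median_cwm_ratio[OF j] x_def[symmetric] M_def[symmetric]
    by (intro sum_votes_nonneg_if_median_far[OF _ s]) (auto simp: M_def)
  also have "\<dots> = (\<Sum>i<n. cwm_vote d \<beta> \<eta> j s t i x)"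
    by (intro sum.cong) (auto simp: cwm_vote_def M_def)
  finally show ?thesis using space unfolding cwm_fail_def x_def by simp
qed

lemma cwm_top_k_error_le_if_not_fail:
  fixes \<beta> \<eta> w \<sigma> :: "nat \<Rightarrow> real" and X :: "nat \<times> nat \<Rightarrow> real" and n d :: nat
  defines "\<beta>' \<equiv> cwm n (\<lambda>i. (\<Sum>l<d. X (i, l) * \<beta> l) + \<eta> i) X w \<sigma>"
  assumes sparse: "card {j. j < d \<and> \<beta> j \<noteq> 0} \<le> k"
    and space: "to_coords n d ((X, w), \<sigma>) \<in> space (coord_space n d)"
    and no_fail: "\<And>j s. j < d \<Longrightarrow> s \<in> {-1, 1} \<Longrightarrow> to_coords n d ((X, w), \<sigma>) \<notin> cwm_fail n d \<beta> \<eta> j s t"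
    and S: "S \<in> top_k_sets d k \<beta>'"
  shows "(\<Sum>j<d. (\<beta> j - restrict_to S \<beta>' j)\<^sup>2) \<le> 5 * real k * t\<^sup>2"
proof (rule top_k_restrict_sq_error_le[OF _ sparse S])
  fix j assume j: "j < d"
  have "\<not> t < s * (\<beta>' j - \<beta> j)" if "s \<in> {-1, 1}" for s
    using cwm_far_imp_fail[OF j that _ space] no_fail[OF j that] unfolding \<beta>'_def by blast
  from this[of 1] this[of "-1"] show "\<bar>\<beta>' j - \<beta> j\<bar> \<le> t" by auto
qed

lemma cwm_hard_threshold_error_bound:
  fixes n d k :: nat and \<beta> \<eta> :: "nat \<Rightarrow> real" and \<alpha> \<tau> :: real
  assumes sparse: "card {j. j < d \<and> \<beta> j \<noteq> 0} \<le> k" and \<alpha>: "0 < \<alpha>" "\<alpha> \<le> 1"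
    and good: "\<alpha> * real n \<le> real (card {i. i < n \<and> \<bar>\<eta> i\<bar> \<le> 1})"
    and \<tau>: "0 < \<tau>" "\<tau> \<le> \<alpha>\<^sup>2 * real n"
  shows "\<exists>A \<in> sets (sample_space n d).
           1 - 2 * exp (ln (real d) - 1 / (2 * 1458\<^sup>2) * \<tau>) \<le> measure (sample_space n d) A \<and>
           A \<subseteq> {((X, w), \<sigma>). let y = (\<lambda>i. (\<Sum>j<d. X (i, j) * \<beta> j) + \<eta> i); \<beta>' = cwm n y X w \<sigma>
                in \<forall>S \<in> top_k_sets d k \<beta>'. (\<Sum>j<d. (\<beta> j - restrict_to S \<beta>' j)\<^sup>2)
                     \<le> 20 * (real k * \<tau>) / (\<alpha>\<^sup>2 * real n) * (1 + (\<Sum>j<d. (\<beta> j)\<^sup>2))}"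
    (is "\<exists>A \<in> _. _ \<and> A \<subseteq> ?good")
proof -
  interpret prob_space "coord_space n d" by simp
  have n: "0 < n" using \<tau> by (cases n) auto
  define u where "u = sqrt (\<tau> / (\<alpha>\<^sup>2 * n))"
  define t where "t = 2 * u * sqrt (1 + (\<Sum>l<d. (\<beta> l)\<^sup>2))"
  define F where "F = (\<Union>j<d. \<Union>s\<in>{-1, 1}. cwm_fail n d \<beta> \<eta> j s t)"
  define A where "A = to_coords n d -` (space (coord_space n d) - F) \<inter> space (sample_space n d)"
  have u: "0 \<le> u" "u \<le> 1" and u\<alpha>: "(u * \<alpha>)\<^sup>2 * n = \<tau>"
    using \<alpha> \<tau> n by (auto simp: u_def power_mult_distrib)
  have F: "F \<in> events" unfolding F_def by (intro sets.finite_UN) (auto simp: sets_cwm_fail)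
  have "prob F \<le> 2 * d * exp (- (1 / (2 * 1458\<^sup>2) * \<tau>))"
    using prob_cwm_fail_union_le[OF n u _ _ good] \<alpha> u\<alpha> by (simp add: F_def t_def)
  also have "\<dots> \<le> 2 * exp (ln (real d) - 1 / (2 * 1458\<^sup>2) * \<tau>)"
  proof (cases "d = 0")
    case False
    then show ?thesis using exp_add[of "ln (real d)" "- (1 / (2 * 1458\<^sup>2) * \<tau>)"] by simp
  qed simp
  finally have prob_F: "prob F \<le> 2 * exp (ln (real d) - 1 / (2 * 1458\<^sup>2) * \<tau>)" .
  show ?thesis
  proof (intro bexI conjI)
    show A: "A \<in> sets (sample_space n d)"
      unfolding A_def using F by (intro measurable_sets[OF measurable_to_coords]) auto
    have "measure (sample_space n d) A = 1 - prob F"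
      unfolding A_def using F by (simp add: measure_to_coords_vimage prob_compl)
    then show "1 - 2 * exp (ln (real d) - 1 / (2 * 1458\<^sup>2) * \<tau>) \<le> measure (sample_space n d) A"
      using prob_F by simp
    have bound: "5 * real k * t\<^sup>2 = 20 * (real k * \<tau>) / (\<alpha>\<^sup>2 * real n) * (1 + (\<Sum>j<d. (\<beta> j)\<^sup>2))"
      using \<alpha> \<tau> n by (simp add: t_def u_def power_mult_distrib sum_nonneg)
    show "A \<subseteq> ?good"
    proof
      fix \<omega> assume \<omega>: "\<omega> \<in> A"
      obtain X w \<sigma> where \<omega>_eq: "\<omega> = ((X, w), \<sigma>)" by (metis prod.collapse)
      have "to_coords n d ((X, w), \<sigma>) \<in> space (coord_space n d)"
        and "\<And>j s. j < d \<Longrightarrow> s \<in> {-1, 1} \<Longrightarrow> to_coords n d ((X, w), \<sigma>) \<notin> cwm_fail n d \<beta> \<eta> j s t"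
        using \<omega> unfolding A_def F_def \<omega>_eq by blast+
      then have "\<forall>S \<in> top_k_sets d k (cwm n (\<lambda>i. (\<Sum>j<d. X (i, j) * \<beta> j) + \<eta> i) X w \<sigma>).
          (\<Sum>j<d. (\<beta> j - restrict_to S (cwm n (\<lambda>i. (\<Sum>j<d. X (i, j) * \<beta> j) + \<eta> i) X w \<sigma>) j)\<^sup>2)
            \<le> 5 * real k * t\<^sup>2"
        using cwm_top_k_error_le_if_not_fail[OF sparse] by blast
      then show "\<omega> \<in> ?good"
        unfolding \<omega>_eq bound[symmetric] by (simp only: mem_Collect_eq prod.case Let_def)
    qed
  qed
qed

theorem mainTheorem15:
  shows "\<exists>c C :: real. c > 0 \<and> C > 0 \<and>
    (\<forall>(n::nat) (d::nat) (k::nat) (\<beta>s::nat \<Rightarrow> real) (\<eta>::nat \<Rightarrow> real) (\<alpha>::real) (\<tau>::real).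
      card {j. j < d \<and> \<beta>s j \<noteq> 0} \<le> k \<longrightarrow>
      0 < \<alpha> \<longrightarrow> \<alpha> \<le> 1 \<longrightarrow>
      real (card {i. i < n \<and> \<bar>\<eta> i\<bar> \<le> 1}) \<ge> \<alpha> * real n \<longrightarrow>
      0 < \<tau> \<longrightarrow> \<tau> \<le> \<alpha>\<^sup>2 * real n \<longrightarrow>
      (\<exists>A \<in> sets (sample_space n d).
         measure (sample_space n d) A \<ge> 1 - 2 * exp (ln (real d) - c * \<tau>) \<and>
         A \<subseteq> {((X, w), \<sigma>). let y = (\<lambda>i. (\<Sum>j<d. X (i, j) * \<beta>s j) + \<eta> i);
                                 \<beta>' = cwm n y X w \<sigma>
                             in \<forall>S \<in> top_k_sets d k \<beta>'.
                                  (\<Sum>j<d. (\<beta>s j - restrict_to S \<beta>' j)\<^sup>2)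
                                  \<le> C * (real k * \<tau>) / (\<alpha>\<^sup>2 * real n)
                                      * (1 + (\<Sum>j<d. (\<beta>s j)\<^sup>2))}))"
  by (intro exI[of _ "1 / (2 * 1458\<^sup>2)"] exI[of _ 20] conjI allI impI cwm_hard_threshold_error_bound) simp_all

end
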